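(* Let $\mathbb{F}_q$ be a finite field with $\mathrm{char}(\mathbb{F}_q)>3$ and $3\mid q-1$, let $x$ be a generator of $\mathbb{F}_q^\times$, and let $C=\langle x^3\rangle$ be the subgroup of cubes in $\mathbb{F}_q^\times$. For nonzero $a,b,c,d\in\mathbb{F}_q$, if $a^{-1}c$ and $b^{-1}d$ lie in the same coset of $C$ in $\mathbb{F}_q^\times$, then $J_3(a,b)$ is conjugate to $J_3(c,d)$.
   Context: $\mathfrak{sl}_3(\mathbb{F}_q)$ is the Lie algebra of $3\times3$ traceless matrices over $\mathbb{F}_q$. Fix a primitive cube root of unity $u\in\mathbb{F}_q$. For nonzero $a,b\in\mathbb{F}_q$, $J_3(a,b)$ denotes the decomposition $\mathfrak{sl}_3(\mathbb{F}_q)=H_0\oplus H_1\oplus H_2\oplus H_3$, where $H_0$ is the subalgebra of traceless diagonal matrices and, for $j=1,2,3$ with $(\lambda_j,\mu_j)=(1,1),(u,u^2),(u^2,u)$ respectively, $H_j=\left\langle \begin{pmatrix}0&1&0\\0&0&\lambda_j a\\ \mu_j ab&0&0\end{pmatrix},\begin{pmatrix}0&0&1\\ \mu_j ab&0&0\\0&\lambda_j b&0\end{pmatrix}\right\rangle_{\mathbb{F}_q}$. (Such a decomposition is called a $J_3$-decomposition.) Two such decompositions are conjugate if there is a Lie algebra automorphism of $\mathfrak{sl}_3(\mathbb{F}_q)$ mapping each component of the first onto exactly one component of the second. *)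

theory Defs
  imports "HOL-Analysis.Analysis"
begin

definition m3 :: "'a \<Rightarrow> 'a \<Rightarrow> 'a \<Rightarrow> 'a \<Rightarrow> 'a \<Rightarrow> 'a \<Rightarrow> 'a \<Rightarrow> 'a \<Rightarrow> 'a \<Rightarrow> 'a^3^3" where
  "m3 a11 a12 a13 a21 a22 a23 a31 a32 a33 =
     (\<chi> i j. if i = 0 then (if j = 0 then a11 else if j = 1 then a12 else a13)
             else if i = 1 then (if j = 0 then a21 else if j = 1 then a22 else a23)
             else (if j = 0 then a31 else if j = 1 then a32 else a33))"

definition mtrace :: "'a::comm_ring_1^3^3 \<Rightarrow> 'a" where
  "mtrace A = (\<Sum>i\<in>UNIV. A $ i $ i)"

definition smul :: "'a::comm_ring_1 \<Rightarrow> 'a^3^3 \<Rightarrow> 'a^3^3" where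
  "smul c A = (\<chi> i j. c * A $ i $ j)"

definition sl3 :: "('a::comm_ring_1^3^3) set" where
  "sl3 = {A. mtrace A = 0}"

definition bracket :: "'a::comm_ring_1^3^3 \<Rightarrow> 'a^3^3 \<Rightarrow> 'a^3^3" where
  "bracket X Y = X ** Y - Y ** X"

definition lie_aut_sl3 :: "('a::field^3^3 \<Rightarrow> 'a^3^3) \<Rightarrow> bool" where
  "lie_aut_sl3 \<phi> \<longleftrightarrow> bij_betw \<phi> sl3 sl3
     \<and> (\<forall>X\<in>sl3. \<forall>Y\<in>sl3. \<phi> (X + Y) = \<phi> X + \<phi> Y)
     \<and> (\<forall>c. \<forall>X\<in>sl3. \<phi> (smul c X) = smul c (\<phi> X))
     \<and> (\<forall>X\<in>sl3. \<forall>Y\<in>sl3. \<phi> (bracket X Y) = bracket (\<phi> X) (\<phi> Y))"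

text \<open>Components H_0,...,H_3 of J_3(a,b), relative to the fixed cube root of unity u.\<close>
definition J3_lam :: "'a::field \<Rightarrow> nat \<Rightarrow> 'a" where
  "J3_lam u j = (if j = 1 then 1 else if j = 2 then u else u^2)"

definition J3_mu :: "'a::field \<Rightarrow> nat \<Rightarrow> 'a" where
  "J3_mu u j = (if j = 1 then 1 else if j = 2 then u^2 else u)"

definition J3 :: "'a::field \<Rightarrow> 'a \<Rightarrow> 'a \<Rightarrow> nat \<Rightarrow> ('a^3^3) set" where
  "J3 u a b j =
    (if j = 0 then {A \<in> sl3. \<forall>i k. i \<noteq> k \<longrightarrow> A $ i $ k = 0}
     else {smul s (m3 0 1 0  0 0 (J3_lam u j * a)  (J3_mu u j * a * b) 0 0)
           + smul t (m3 0 0 1  (J3_mu u j * a * b) 0 0  0 (J3_lam u j * b) 0) | s t. True})"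

definition J3_conjugate :: "(nat \<Rightarrow> ('a::field^3^3) set) \<Rightarrow> (nat \<Rightarrow> ('a^3^3) set) \<Rightarrow> bool" where
  "J3_conjugate H H' \<longleftrightarrow> (\<exists>\<phi>. lie_aut_sl3 \<phi> \<and>
      (\<forall>i<4. \<exists>!j. j < 4 \<and> \<phi> ` H i = H' j))"

end

theory Submission
  imports Defs
begin

text \<open>Conjugation by the diagonal matrix \<open>diag(rs, s, 1)\<close> fixes \<open>H\<^sub>0\<close> and multiplies the two
  generators of \<open>H\<^sub>j(a,b)\<close> by \<open>r\<close> and \<open>rs\<close>, turning them into the generators of
  \<open>H\<^sub>j(c,d)\<close> as soon as \<open>as = rc\<close> and \<open>b = rs\<^sup>2d\<close>. Eliminating \<open>r\<close>, such \<open>r, s\<close> exist iff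
  \<open>(a\<^sup>-\<^sup>1c)/(b\<^sup>-\<^sup>1d) = s\<^sup>3\<close> is a cube, which is exactly the coset hypothesis. The components
  \<open>H\<^sub>0,\<dots>,H\<^sub>3\<close> are pairwise distinct because \<open>1, u, u\<^sup>2\<close> are, so the automorphism matches
  components bijectively.\<close>

lemma numeral_3_eq_0: "(3::3) = 0"
  by simp

lemma forall_3_from_0: "(\<forall>i::3. P i) \<longleftrightarrow> P 0 \<and> P 1 \<and> P 2"
  by (metis forall_3 numeral_3_eq_0)

lemma sum_UNIV_3: "sum f (UNIV :: 3 set) = f 0 + f 1 + f 2"
  by (simp add: sum_3 numeral_3_eq_0 ac_simps)

definition diag_conj :: "(3 \<Rightarrow> 'a::field) \<Rightarrow> 'a^3^3 \<Rightarrow> 'a^3^3" where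
  "diag_conj e X = (\<chi> i j. e i * X $ i $ j * inverse (e j))"

lemma diag_conj_nth [simp]: "diag_conj e X $ i $ j = e i * X $ i $ j * inverse (e j)"
  by (simp add: diag_conj_def)

lemma diag_conj_inverse:
  assumes "\<And>i. e i \<noteq> 0"
  shows "diag_conj (\<lambda>i. inverse (e i)) (diag_conj e X) = X"
  using assms by (simp add: vec_eq_iff field_simps)

lemma mtrace_diag_conj:
  assumes "\<And>i. e i \<noteq> 0"
  shows "mtrace (diag_conj e X) = mtrace X"
proof -
  have cancel: "e i * X $ i $ i * inverse (e i) = X $ i $ i" for i
    using assms[of i] by simp
  show ?thesis
    unfolding mtrace_def diag_conj_nth cancel ..
qed

lemma diag_conj_add: "diag_conj e (X + Y) = diag_conj e X + diag_conj e Y"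
  by (simp add: vec_eq_iff algebra_simps)

lemma diag_conj_diff: "diag_conj e (X - Y) = diag_conj e X - diag_conj e Y"
  by (simp add: vec_eq_iff algebra_simps)

lemma diag_conj_smul: "diag_conj e (smul c X) = smul c (diag_conj e X)"
  by (simp add: vec_eq_iff smul_def algebra_simps)

lemma diag_conj_matrix_mult:
  assumes "\<And>i. e i \<noteq> 0"
  shows "diag_conj e (X ** Y) = diag_conj e X ** diag_conj e Y"
  using assms by (simp add: vec_eq_iff matrix_matrix_mult_def sum_UNIV_3 field_simps)

lemma lie_aut_sl3_diag_conj:
  assumes "\<And>i. e i \<noteq> 0"
  shows "lie_aut_sl3 (diag_conj e)"
proof -
  have inv: "\<And>i. inverse (e i) \<noteq> 0"
    using assms by simp
  have "bij_betw (diag_conj e) sl3 sl3"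
    by (rule bij_betw_byWitness[where f' = "diag_conj (\<lambda>i. inverse (e i))"])
      (auto simp: sl3_def mtrace_diag_conj assms inv diag_conj_inverse
        diag_conj_inverse[OF inv, simplified])
  then show ?thesis
    unfolding lie_aut_sl3_def bracket_def
    by (simp add: diag_conj_add diag_conj_diff diag_conj_smul diag_conj_matrix_mult assms)
qed

lemma diag_conj_image_span2:
  assumes "diag_conj e A = smul \<alpha> A'" "diag_conj e B = smul \<beta> B'" "\<alpha> \<noteq> 0" "\<beta> \<noteq> 0"
  shows "diag_conj e ` {smul s A + smul t B | s t. True} = {smul s A' + smul t B' | s t. True}"
proof -
  have image: "diag_conj e (smul s A + smul t B) = smul (s * \<alpha>) A' + smul (t * \<beta>) B'" for s t
    using assms(1,2) by (simp add: diag_conj_add diag_conj_smul smul_def vec_eq_iff ac_simps)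
  have "smul s A' + smul t B' = diag_conj e (smul (s / \<alpha>) A + smul (t / \<beta>) B)" for s t
    using assms(3,4) by (simp add: image)
  then show ?thesis
    using image by blast
qed

definition J3_gen1 :: "'a::field \<Rightarrow> 'a \<Rightarrow> 'a \<Rightarrow> 'a \<Rightarrow> 'a^3^3" where
  "J3_gen1 l m a b = m3 0 1 0  0 0 (l * a)  (m * a * b) 0 0"

definition J3_gen2 :: "'a::field \<Rightarrow> 'a \<Rightarrow> 'a \<Rightarrow> 'a \<Rightarrow> 'a^3^3" where
  "J3_gen2 l m a b = m3 0 0 1  (m * a * b) 0 0  0 (l * b) 0"

lemma J3_eq_span:
  assumes "j \<noteq> 0"
  shows "J3 u a b j = {smul s (J3_gen1 (J3_lam u j) (J3_mu u j) a b)
                     + smul t (J3_gen2 (J3_lam u j) (J3_mu u j) a b) | s t. True}"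
  using assms by (simp add: J3_def J3_gen1_def J3_gen2_def)

definition diag3 :: "'a \<Rightarrow> 'a \<Rightarrow> 'a \<Rightarrow> 3 \<Rightarrow> 'a" where
  "diag3 x y z i = (if i = 0 then x else if i = 1 then y else z)"

lemma diag_conj_J3_gen1:
  assumes "r \<noteq> 0" "s \<noteq> 0" "a * s = r * c" "b = r * s^2 * d"
  shows "diag_conj (diag3 (r * s) s 1) (J3_gen1 l m a b) = smul r (J3_gen1 l m c d)"
proof -
  have "a * b = r^2 * s * c * d"
    using assms(3,4) by (simp add: power2_eq_square)
  then show ?thesis
    using assms by (simp add: vec_eq_iff forall_3_from_0 diag3_def J3_gen1_def m3_def smul_def
        field_simps power2_eq_square)
qed

lemma diag_conj_J3_gen2:
  assumes "r \<noteq> 0" "s \<noteq> 0" "a * s = r * c" "b = r * s^2 * d"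
  shows "diag_conj (diag3 (r * s) s 1) (J3_gen2 l m a b) = smul (r * s) (J3_gen2 l m c d)"
proof -
  have "a * b = r^2 * s * c * d"
    using assms(3,4) by (simp add: power2_eq_square)
  then show ?thesis
    using assms by (simp add: vec_eq_iff forall_3_from_0 diag3_def J3_gen2_def m3_def smul_def
        field_simps power2_eq_square)
qed

lemma diag_conj_fixes_diagonal:
  assumes "\<And>i. e i \<noteq> 0" "\<forall>i k. i \<noteq> k \<longrightarrow> X $ i $ k = 0"
  shows "diag_conj e X = X"
proof -
  have "diag_conj e X $ i $ k = X $ i $ k" for i k
    using assms by (cases "i = k") auto
  then show ?thesis
    by (simp add: vec_eq_iff)
qed

lemma diag_conj_image_J3:
  assumes "r \<noteq> 0" "s \<noteq> 0" "a * s = r * c" "b = r * s^2 * d"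
  shows "diag_conj (diag3 (r * s) s 1) ` J3 u a b j = J3 u c d j"
proof (cases "j = 0")
  case True
  have "\<And>i. diag3 (r * s) s 1 i \<noteq> 0"
    using assms(1,2) by (simp add: diag3_def)
  then have "diag_conj (diag3 (r * s) s 1) X = X" if "X \<in> J3 u a b 0" for X
    using that by (intro diag_conj_fixes_diagonal) (simp_all add: J3_def)
  moreover have "J3 u a b 0 = J3 u c d 0"
    by (simp add: J3_def)
  ultimately show ?thesis
    using True by force
next
  case False
  then show ?thesis
    unfolding J3_eq_span[OF False]
    using assms(1,2)
    by (intro diag_conj_image_span2[OF diag_conj_J3_gen1[OF assms] diag_conj_J3_gen2[OF assms]])
      simp_all
qed

lemma J3_gen1_mem_J3:
  assumes "j \<noteq> 0"
  shows "J3_gen1 (J3_lam u j) (J3_mu u j) a b \<in> J3 u a b j"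
  unfolding J3_eq_span[OF assms]
  by (rule CollectI, rule exI[of _ 1], rule exI[of _ 0]) (simp add: smul_def vec_eq_iff)

lemma J3_gen1_not_mem_J3_0: "J3_gen1 l m a b \<notin> J3 u c d 0"
proof
  assume "J3_gen1 l m a b \<in> J3 u c d 0"
  then have "J3_gen1 l m a b $ 0 $ 1 = 0"
    by (simp add: J3_def)
  then show False
    by (simp add: J3_gen1_def m3_def)
qed

lemma J3_lam_eq_if_J3_gen1_mem:
  assumes "a \<noteq> 0" "k \<noteq> 0" "J3_gen1 l m a b \<in> J3 u a b k"
  shows "l = J3_lam u k"
proof -
  obtain s t where st: "J3_gen1 l m a b =
      smul s (J3_gen1 (J3_lam u k) (J3_mu u k) a b) + smul t (J3_gen2 (J3_lam u k) (J3_mu u k) a b)"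
    using assms(3) unfolding J3_eq_span[OF assms(2)] by blast
  have "s = 1" "t = 0" "l * a = s * (J3_lam u k * a)"
    using arg_cong[OF st, of "\<lambda>X. X $ 0 $ 1"] arg_cong[OF st, of "\<lambda>X. X $ 0 $ 2"]
      arg_cong[OF st, of "\<lambda>X. X $ 1 $ 2"]
    by (simp_all add: J3_gen1_def J3_gen2_def m3_def smul_def)
  then show ?thesis
    using assms(1) by simp
qed

lemma J3_lam_inj_on:
  assumes "u ^ 3 = 1" "u \<noteq> 1"
  shows "inj_on (J3_lam u) {1, 2, 3}"
proof -
  have "u ^ 3 = u * u ^ 2"
    by (simp add: power2_eq_square power3_eq_cube)
  then have "u ^ 2 \<noteq> 1" "u \<noteq> 0"
    using assms by auto
  then have "u ^ 2 \<noteq> u"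
    using assms(2) by (simp add: power2_eq_square)
  then show ?thesis
    using assms(2) \<open>u ^ 2 \<noteq> 1\<close> by (auto simp: inj_on_def J3_lam_def)
qed

lemma inj_on_J3:
  assumes "u ^ 3 = 1" "u \<noteq> 1" "a \<noteq> 0"
  shows "inj_on (J3 u a b) {..<4}"
proof (rule inj_onI)
  fix j k :: nat
  assume jk: "j \<in> {..<4}" "k \<in> {..<4}" "J3 u a b j = J3 u a b k"
  show "j = k"
  proof (cases "j = 0 \<or> k = 0")
    case True
    then show ?thesis
      using jk(3) J3_gen1_mem_J3 J3_gen1_not_mem_J3_0 by metis
  next
    case False
    then have "J3_lam u j = J3_lam u k"
      using J3_lam_eq_if_J3_gen1_mem[OF assms(3)] J3_gen1_mem_J3 jk(3) by metis
    moreover have "j \<in> {1, 2, 3}" "k \<in> {1, 2, 3}"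
      using jk(1,2) False by auto
    ultimately show ?thesis
      using inj_onD[OF J3_lam_inj_on[OF assms(1,2)]] by blast
  qed
qed

lemma J3_conjugateI:
  assumes "lie_aut_sl3 \<phi>" "\<And>i. i < 4 \<Longrightarrow> \<phi> ` H i = H' i" "inj_on H' {..<4}"
  shows "J3_conjugate H H'"
  unfolding J3_conjugate_def
proof (intro exI conjI allI impI)
  fix i :: nat
  assume "i < 4"
  then show "\<exists>!j. j < 4 \<and> \<phi> ` H i = H' j"
    using assms(2,3) by (auto simp: inj_on_def)
qed (fact assms(1))

lemma J3_conjugate_if_ratio_cube:
  assumes "u ^ 3 = 1" "u \<noteq> 1" "a \<noteq> 0" "b \<noteq> 0" "c \<noteq> 0" "s \<noteq> 0"
    and "inverse a * c = s ^ 3 * (inverse b * d)"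
  shows "J3_conjugate (J3 u a b) (J3 u c d)"
proof -
  define r where "r = a * s / c"
  have r: "r \<noteq> 0" "a * s = r * c"
    using assms(3,5,6) by (simp_all add: r_def)
  have "b = r * s^2 * d"
    using assms(3-7) by (simp add: r_def field_simps power2_eq_square power3_eq_cube)
  then have "diag_conj (diag3 (r * s) s 1) ` J3 u a b j = J3 u c d j" for j
    using diag_conj_image_J3 r assms(6) by blast
  moreover have "lie_aut_sl3 (diag_conj (diag3 (r * s) s 1))"
    using r(1) assms(6) by (simp add: lie_aut_sl3_diag_conj diag3_def)
  ultimately show ?thesis
    using J3_conjugateI inj_on_J3[OF assms(1,2,5)] by blast
qed

theorem lemma3p9:
  fixes u x a b c d :: "'a::{field,finite}"
  assumes "CHAR('a) > 3"
    and "3 dvd (CARD('a) - 1)"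
    and "u ^ 3 = 1" and "u \<noteq> 1"
    and "x \<noteq> 0" and "\<forall>y. y \<noteq> 0 \<longrightarrow> (\<exists>n::nat. y = x ^ n)"
    and "a \<noteq> 0" and "b \<noteq> 0" and "c \<noteq> 0" and "d \<noteq> 0"
    and "\<exists>g. g \<noteq> 0 \<and> inverse a * c \<in> (\<lambda>z. g * z) ` {x ^ (3 * n) | n. True}
                   \<and> inverse b * d \<in> (\<lambda>z. g * z) ` {x ^ (3 * n) | n. True}"
  shows "J3_conjugate (J3 u a b) (J3 u c d)"
proof -
  obtain g m n where "inverse a * c = g * x ^ (3 * m)" "inverse b * d = g * x ^ (3 * n)"
    using assms(11) by blast
  then have "inverse a * c = (x ^ m / x ^ n) ^ 3 * (inverse b * d)"
    using assms(5) by (simp add: power_divide power_mult[symmetric] mult.commute)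
  moreover have "x ^ m / x ^ n \<noteq> 0"
    using assms(5) by simp
  ultimately show ?thesis
    using J3_conjugate_if_ratio_cube assms(3,4,7-9) by blast
qed

end
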